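(* Let $(X,\mathcal{F},\mu)$ be a probability space with $L^2(X,\mu)$ infinite dimensional, and let $P$ be a reversible Markov operator on $L^2(X,\mu)$. Then for every $k\geq1$, \[ h_P(k)+\overline{h}_P(k)\leq1. \]
   Context: A Markov operator is a linear operator $P:L^2(X,\mu)\to L^2(X,\mu)$ with $P1=1$ and $Pf\geq0$ whenever $f\geq0$; it is reversible if $\int_XgPf\,d\mu=\int_XfPg\,d\mu$ for all $f,g\in L^2(X,\mu)$. Write $(f,g)_\mu=\int_Xfg\,d\mu$, $1_A$ for the indicator of $A$, $\overline{S}=X\setminus S$. $h_P(k):=\inf\max_{1\leq i\leq k}\frac{(1_{S_i},P1_{\overline{S_i}})_\mu}{\mu(S_i)}$ over all collections of $k$ pairwise disjoint measurable sets with $\mu(S_i)>0$. $\overline{h}_P(k):=\sup\min_{1\leq i\leq k}\frac{2(1_{A_{2i-1}},P1_{A_{2i}})_\mu}{\mu(A_{2i-1}\cup A_{2i})}$ over all collections of $k$ pairs of measurable sets $(A_1,A_2),\ldots,(A_{2k-1},A_{2k})$, pairwise disjoint, with $\mu(A_{2i-1}\cup A_{2i})>0$ for each $i$. *)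

theory Defs
  imports "HOL-Probability.Probability"
begin

text \<open>Elements of L^2(X,mu) are represented by measurable square-integrable
real functions; equality in L^2 is equality almost everywhere.\<close>

definition L2 :: "'a measure \<Rightarrow> ('a \<Rightarrow> real) set" where
  "L2 M = {f. f \<in> borel_measurable M \<and> integrable M (\<lambda>x. (f x)\<^sup>2)}"

definition L2_infinite_dim :: "'a measure \<Rightarrow> bool" where
  "L2_infinite_dim M \<longleftrightarrow>
     (\<forall>n::nat. \<exists>f :: nat \<Rightarrow> 'a \<Rightarrow> real. (\<forall>i<n. f i \<in> L2 M) \<and>
        (\<forall>c :: nat \<Rightarrow> real. (AE x in M. (\<Sum>i<n. c i * f i x) = 0) \<longrightarrow> (\<forall>i<n. c i = 0)))"

text \<open>A linear operator on L^2(X,mu), acting on representatives and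
compatible with a.e. equality.\<close>

definition L2_linear_operator :: "'a measure \<Rightarrow> (('a \<Rightarrow> real) \<Rightarrow> ('a \<Rightarrow> real)) \<Rightarrow> bool" where
  "L2_linear_operator M P \<longleftrightarrow>
     (\<forall>f\<in>L2 M. P f \<in> L2 M) \<and>
     (\<forall>f\<in>L2 M. \<forall>g\<in>L2 M. (AE x in M. f x = g x) \<longrightarrow> (AE x in M. P f x = P g x)) \<and>
     (\<forall>f\<in>L2 M. \<forall>g\<in>L2 M. \<forall>a b :: real.
        AE x in M. P (\<lambda>y. a * f y + b * g y) x = a * P f x + b * P g x)"

definition markov_operator :: "'a measure \<Rightarrow> (('a \<Rightarrow> real) \<Rightarrow> ('a \<Rightarrow> real)) \<Rightarrow> bool" where
  "markov_operator M P \<longleftrightarrow>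
     L2_linear_operator M P \<and>
     (AE x in M. P (\<lambda>_. 1) x = 1) \<and>
     (\<forall>f\<in>L2 M. (AE x in M. f x \<ge> 0) \<longrightarrow> (AE x in M. P f x \<ge> 0))"

definition reversible :: "'a measure \<Rightarrow> (('a \<Rightarrow> real) \<Rightarrow> ('a \<Rightarrow> real)) \<Rightarrow> bool" where
  "reversible M P \<longleftrightarrow>
     (\<forall>f\<in>L2 M. \<forall>g\<in>L2 M. (LINT x|M. g x * P f x) = (LINT x|M. f x * P g x))"

definition ip :: "'a measure \<Rightarrow> ('a \<Rightarrow> real) \<Rightarrow> ('a \<Rightarrow> real) \<Rightarrow> real" where
  "ip M f g = (LINT x|M. f x * g x)"

definition hP :: "'a measure \<Rightarrow> (('a \<Rightarrow> real) \<Rightarrow> ('a \<Rightarrow> real)) \<Rightarrow> nat \<Rightarrow> real" where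
  "hP M P k = Inf {Max ((\<lambda>i. ip M (indicator (S i)) (P (indicator (space M - S i)))
                              / measure M (S i)) ` {..<k})
                  | S :: nat \<Rightarrow> 'a set.
                    (\<forall>i<k. S i \<in> sets M \<and> measure M (S i) > 0) \<and>
                    (\<forall>i<k. \<forall>j<k. i \<noteq> j \<longrightarrow> S i \<inter> S j = {})}"

text \<open>overline h_P(k): supremum over k pairs (A_i, B_i), i < k, of the 2k
pairwise disjoint measurable sets with mu(A_i \<union> B_i) > 0, of
min_i 2 (1_{A_i}, P 1_{B_i}) / mu(A_i \<union> B_i).  (The pair (A_{2i-1},A_{2i})
of the paper is (A_i, B_i) here.)\<close>

definition hP_bar :: "'a measure \<Rightarrow> (('a \<Rightarrow> real) \<Rightarrow> ('a \<Rightarrow> real)) \<Rightarrow> nat \<Rightarrow> real" where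
  "hP_bar M P k = Sup {Min ((\<lambda>i. 2 * ip M (indicator (A i)) (P (indicator (B i)))
                              / measure M (A i \<union> B i)) ` {..<k})
                  | A B :: nat \<Rightarrow> 'a set.
                    (\<forall>i<k. A i \<in> sets M \<and> B i \<in> sets M \<and> measure M (A i \<union> B i) > 0) \<and>
                    (\<forall>i<k. \<forall>j<k. i \<noteq> j \<longrightarrow> A i \<inter> A j = {} \<and> B i \<inter> B j = {}) \<and>
                    (\<forall>i<k. \<forall>j<k. A i \<inter> B j = {})}"

end

theory Submission
  imports Defs
begin

text \<open>Write S = A \<union> B with A, B disjoint.  Since P 1 = 1, the boundary term
  (1_S, P 1_{X-S}) equals \<mu>(S) - (1_S, P 1_S), and by reversibility
  (1_S, P 1_S) = (1_A, P 1_A) + (1_B, P 1_B) + 2 (1_A, P 1_B) \<ge> 2 (1_A, P 1_B),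
  the first two terms being nonnegative by positivity of P.  So for S_i = A_i \<union> B_i every ratio
  in the definition of h_P(k) is at most one minus the corresponding ratio of the pairs.\<close>

lemma indicator_in_L2:
  assumes "finite_measure M" "S \<in> sets M"
  shows "indicator S \<in> L2 M"
proof -
  have "(\<lambda>x. (indicator S x :: real)\<^sup>2) = indicator S"
    by (auto simp: indicator_def)
  moreover have "integrable M (indicator S :: 'a \<Rightarrow> real)"
    using assms finite_measure.emeasure_finite
    by (intro integrable_real_indicator) (auto simp: top.not_eq_extremum[symmetric])
  ultimately show ?thesis
    using assms(2) unfolding L2_def by auto
qed

lemma L2_imp_borel_measurable: "f \<in> L2 M \<Longrightarrow> f \<in> borel_measurable M"
  unfolding L2_def by auto

lemma L2_imp_integrable:
  assumes "finite_measure M" "f \<in> L2 M"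
  shows "integrable M f"
proof (rule Bochner_Integration.integrable_bound)
  show "integrable M (\<lambda>x. 1 + (f x)\<^sup>2)"
    using assms unfolding L2_def by (simp add: finite_measure.integrable_const)
  show "f \<in> borel_measurable M"
    using assms(2) by (rule L2_imp_borel_measurable)
  have "\<bar>y\<bar> \<le> 1 + y\<^sup>2" for y :: real
    using zero_le_power2[of "\<bar>y\<bar> - 1"] by (simp add: power2_diff)
  then show "AE x in M. norm (f x) \<le> norm (1 + (f x)\<^sup>2)"
    by simp
qed

lemma integrable_indicator_times_L2:
  assumes "finite_measure M" "S \<in> sets M" "g \<in> L2 M"
  shows "integrable M (\<lambda>x. indicator S x * g x)"
  using integrable_mult_indicator[OF assms(2) L2_imp_integrable[OF assms(1,3)]] by simp

lemma ip_indicator_add_right: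
  assumes "finite_measure M" "S \<in> sets M" "g \<in> L2 M" "h \<in> L2 M"
  shows "ip M (indicator S) (\<lambda>x. g x + h x) = ip M (indicator S) g + ip M (indicator S) h"
  using integrable_indicator_times_L2[OF assms(1,2)] assms(3,4)
  unfolding ip_def by (simp add: distrib_left)

lemma ip_cong_AE:
  assumes "f \<in> borel_measurable M" "g \<in> borel_measurable M" "h \<in> borel_measurable M"
    and "AE x in M. g x = h x"
  shows "ip M f g = ip M f h"
  unfolding ip_def using assms by (intro integral_cong_AE) auto

lemma markov_operator_L2:
  "markov_operator M P \<Longrightarrow> f \<in> L2 M \<Longrightarrow> P f \<in> L2 M"
  unfolding markov_operator_def L2_linear_operator_def by auto

lemma markov_operator_cong_AE:
  "markov_operator M P \<Longrightarrow> f \<in> L2 M \<Longrightarrow> g \<in> L2 M \<Longrightarrow> AE x in M. f x = g x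
    \<Longrightarrow> AE x in M. P f x = P g x"
  unfolding markov_operator_def L2_linear_operator_def by auto

lemma markov_operator_add:
  assumes "markov_operator M P" "f \<in> L2 M" "g \<in> L2 M"
  shows "AE x in M. P (\<lambda>y. f y + g y) x = P f x + P g x"
proof -
  have "AE x in M. P (\<lambda>y. 1 * f y + 1 * g y) x = 1 * P f x + 1 * P g x"
    using assms unfolding markov_operator_def L2_linear_operator_def by blast
  then show ?thesis
    by simp
qed

lemma markov_operator_indicator_Un:
  assumes "finite_measure M" "markov_operator M P"
    and "A \<in> sets M" "B \<in> sets M" "A \<inter> B = {}"
  shows "AE x in M. P (indicator (A \<union> B)) x = P (indicator A) x + P (indicator B) x"
proof -
  have "(\<lambda>y. indicator A y + indicator B y) = (indicator (A \<union> B) :: 'a \<Rightarrow> real)"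
    using assms(5) by (auto simp: indicator_def fun_eq_iff)
  then show ?thesis
    using markov_operator_add[OF assms(2) indicator_in_L2[OF assms(1,3)] indicator_in_L2[OF assms(1,4)]]
    by simp
qed

lemma markov_operator_indicator_compl:
  assumes "finite_measure M" "markov_operator M P" "S \<in> sets M"
  shows "AE x in M. P (indicator (space M - S)) x = 1 - P (indicator S) x"
proof -
  have "(\<lambda>_. 1::real) \<in> L2 M"
    using assms(1) unfolding L2_def by (simp add: finite_measure.integrable_const)
  then have "AE x in M. P (indicator (space M)) x = P (\<lambda>_. 1) x"
    using indicator_in_L2[OF assms(1) sets.top] by (intro markov_operator_cong_AE[OF assms(2)]) auto
  moreover have "space M = S \<union> (space M - S)"
    using sets.sets_into_space[OF assms(3)] by auto
  then have "AE x in M. P (indicator (space M)) x = P (indicator S) x + P (indicator (space M - S)) x"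
    using markov_operator_indicator_Un[OF assms(1,2,3), of "space M - S"] assms(3) by simp
  moreover have "AE x in M. P (\<lambda>_. 1) x = 1"
    using assms(2) unfolding markov_operator_def by blast
  ultimately show ?thesis
    by eventually_elim simp
qed

lemma ip_indicator_markov_nonneg:
  assumes "finite_measure M" "markov_operator M P" "T \<in> sets M"
  shows "ip M (indicator S) (P (indicator T)) \<ge> 0"
proof -
  have "AE x in M. P (indicator T) x \<ge> 0"
    using assms indicator_in_L2[OF assms(1,3)] unfolding markov_operator_def by auto
  then show ?thesis
    unfolding ip_def by (intro integral_nonneg_AE) auto
qed

lemma ip_indicator_markov_compl:
  assumes "finite_measure M" "markov_operator M P" "S \<in> sets M"
  shows "ip M (indicator S) (P (indicator (space M - S)))
    = measure M S - ip M (indicator S) (P (indicator S))"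
proof -
  have PS: "P (indicator S) \<in> L2 M" and PC: "P (indicator (space M - S)) \<in> L2 M"
    using assms markov_operator_L2 indicator_in_L2 by blast+
  have "ip M (indicator S) (P (indicator (space M - S)))
      = ip M (indicator S) (\<lambda>x. 1 + - P (indicator S) x)"
    using markov_operator_indicator_compl[OF assms] assms(3) PS PC
    by (intro ip_cong_AE) (auto dest: L2_imp_borel_measurable)
  also have "\<dots> = ip M (indicator S) (\<lambda>_. 1) + ip M (indicator S) (\<lambda>x. - P (indicator S) x)"
    using assms(1,3) PS by (intro ip_indicator_add_right) (auto simp: L2_def finite_measure.integrable_const)
  also have "\<dots> = measure M S - ip M (indicator S) (P (indicator S))"
    using sets.sets_into_space[OF assms(3)] by (simp add: ip_def Int_absorb2)
  finally show ?thesis .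
qed

lemma ip_indicator_markov_Un:
  assumes "finite_measure M" "markov_operator M P" "reversible M P"
    and "A \<in> sets M" "B \<in> sets M" "A \<inter> B = {}"
  shows "ip M (indicator (A \<union> B)) (P (indicator (A \<union> B)))
    = ip M (indicator A) (P (indicator A)) + ip M (indicator B) (P (indicator B))
      + 2 * ip M (indicator A) (P (indicator B))"
proof -
  have L2: "indicator A \<in> L2 M" "indicator B \<in> L2 M" "indicator (A \<union> B) \<in> L2 M"
    using assms indicator_in_L2 by blast+
  then have PL2: "P (indicator A) \<in> L2 M" "P (indicator B) \<in> L2 M" "P (indicator (A \<union> B)) \<in> L2 M"
    using assms(2) markov_operator_L2 by blast+
  have indicator_Un: "ip M (indicator (A \<union> B)) g = ip M (indicator A) g + ip M (indicator B) g"
    if "g \<in> L2 M" for g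
    using integrable_indicator_times_L2[OF assms(1) _ that] assms(4-6)
    by (simp add: ip_def indicator_add[OF assms(6), symmetric] distrib_right)
  have "ip M (indicator (A \<union> B)) (P (indicator (A \<union> B)))
      = ip M (indicator (A \<union> B)) (\<lambda>x. P (indicator A) x + P (indicator B) x)"
    using markov_operator_indicator_Un[OF assms(1,2,4-6)] PL2 assms(4,5)
    by (intro ip_cong_AE borel_measurable_add) (auto dest: L2_imp_borel_measurable)
  also have "\<dots> = ip M (indicator A) (P (indicator A)) + ip M (indicator B) (P (indicator B))
      + (ip M (indicator A) (P (indicator B)) + ip M (indicator B) (P (indicator A)))"
    using PL2 assms(1,4,5)
    by (simp add: indicator_Un ip_indicator_add_right)
  also have "ip M (indicator B) (P (indicator A)) = ip M (indicator A) (P (indicator B))"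
    using assms(3) L2(1,2) unfolding reversible_def ip_def by blast
  finally show ?thesis
    by simp
qed

lemma ip_indicator_markov_boundary_le:
  assumes "finite_measure M" "markov_operator M P" "reversible M P"
    and "A \<in> sets M" "B \<in> sets M" "A \<inter> B = {}"
  shows "ip M (indicator (A \<union> B)) (P (indicator (space M - (A \<union> B))))
    \<le> measure M (A \<union> B) - 2 * ip M (indicator A) (P (indicator B))"
  using ip_indicator_markov_compl[OF assms(1,2) sets.Un[OF assms(4,5)]]
    ip_indicator_markov_Un[OF assms]
    ip_indicator_markov_nonneg[OF assms(1,2,4), of A]
    ip_indicator_markov_nonneg[OF assms(1,2,5), of B]
  by linarith

lemma Inf_add_Sup_le_real:
  fixes f :: "'s \<Rightarrow> real" and g :: "'p \<Rightarrow> 'q \<Rightarrow> real"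
  assumes "0 \<le> c" and "\<And>S. Q S \<Longrightarrow> 0 \<le> f S" and "\<And>S. Q S \<Longrightarrow> \<exists>A B. R A B"
    and "\<And>A B. R A B \<Longrightarrow> \<exists>S. Q S \<and> f S + g A B \<le> c"
  shows "Inf {f S | S. Q S} + Sup {g A B | A B. R A B} \<le> c"
proof (cases "\<exists>A B. R A B")
  case False
  then have "{f S | S. Q S} = {}" "{g A B | A B. R A B} = {}"
    using assms(3) by auto
  then show ?thesis
    using assms(1) by (simp add: Inf_real_def)
next
  case True
  have "bdd_below {f S | S. Q S}"
    using assms(2) by (intro bdd_belowI[of _ 0]) auto
  then have "g A B \<le> c - Inf {f S | S. Q S}" if "R A B" for A B
    using assms(4)[OF that] cInf_lower[of _ "{f S | S. Q S}"] by fastforce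
  then have "Sup {g A B | A B. R A B} \<le> c - Inf {f S | S. Q S}"
    using True by (intro cSup_least) auto
  then show ?thesis
    by simp
qed

lemma Max_boundary_ratio_nonneg:
  fixes k :: nat
  assumes "finite_measure M" "markov_operator M P" "k > 0" "\<forall>i<k. S i \<in> sets M"
  shows "0 \<le> Max ((\<lambda>i. ip M (indicator (S i)) (P (indicator (space M - S i)))
                   / measure M (S i)) ` {..<k})"
proof -
  have "0 \<le> ip M (indicator (S 0)) (P (indicator (space M - S 0))) / measure M (S 0)"
    using ip_indicator_markov_nonneg[OF assms(1,2)] assms(3,4) by auto
  also have "\<dots> \<le> Max ((\<lambda>i. ip M (indicator (S i)) (P (indicator (space M - S i)))
                   / measure M (S i)) ` {..<k})"
    using assms(3) by (intro Max_ge) auto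
  finally show ?thesis .
qed

lemma Max_boundary_ratio_le:
  fixes k :: nat
  assumes "finite_measure M" "markov_operator M P" "reversible M P" "k > 0"
    and "\<forall>i<k. A i \<in> sets M \<and> B i \<in> sets M \<and> measure M (A i \<union> B i) > 0"
    and "\<forall>i<k. A i \<inter> B i = {}"
  shows "Max ((\<lambda>i. ip M (indicator (A i \<union> B i)) (P (indicator (space M - (A i \<union> B i))))
                   / measure M (A i \<union> B i)) ` {..<k})
       \<le> 1 - Min ((\<lambda>i. 2 * ip M (indicator (A i)) (P (indicator (B i)))
                   / measure M (A i \<union> B i)) ` {..<k})"
    (is "Max (?cut ` _) \<le> 1 - Min (?flow ` _)")
proof (rule Max.boundedI)
  fix y assume "y \<in> ?cut ` {..<k}"
  then obtain i where i: "i < k" and y: "y = ?cut i"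
    by auto
  define \<mu> where "\<mu> = measure M (A i \<union> B i)"
  have "\<mu> > 0"
    using assms(5) i unfolding \<mu>_def by blast
  have "y \<le> (\<mu> - 2 * ip M (indicator (A i)) (P (indicator (B i)))) / \<mu>"
    unfolding y \<mu>_def using \<open>\<mu> > 0\<close> assms i
    by (intro divide_right_mono ip_indicator_markov_boundary_le) (auto simp: \<mu>_def)
  also have "\<dots> = 1 - ?flow i"
    using \<open>\<mu> > 0\<close> by (simp add: \<mu>_def diff_divide_distrib)
  also have "\<dots> \<le> 1 - Min (?flow ` {..<k})"
    using i by (intro diff_left_mono Min_le) auto
  finally show "y \<le> 1 - Min (?flow ` {..<k})" .
qed (use assms(4) in auto)

theorem proposition8p3:
  fixes M :: "'a measure" and P :: "('a \<Rightarrow> real) \<Rightarrow> ('a \<Rightarrow> real)" and k :: nat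
  assumes "prob_space M"
    and "L2_infinite_dim M"
    and "markov_operator M P"
    and "reversible M P"
    and "k \<ge> 1"
  shows "hP M P k + hP_bar M P k \<le> 1"
proof -
  have fin: "finite_measure M"
    using assms(1) by (rule prob_space.finite_measure)
  have k_pos: "k > 0"
    using assms(5) by simp
  show ?thesis
    unfolding hP_def hP_bar_def
  proof (rule Inf_add_Sup_le_real, goal_cases)
    case 1
    show ?case by simp
  next
    case (2 S)
    then show ?case
      using k_pos by (intro Max_boundary_ratio_nonneg[OF fin assms(3)]) auto
  next
    case (3 S)
    then show ?case
      by (intro exI[of _ S] exI[of _ "\<lambda>_. {}"]) auto
  next
    case (4 A B)
    then have sets: "\<forall>i<k. A i \<in> sets M \<and> B i \<in> sets M \<and> measure M (A i \<union> B i) > 0"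
      and disjoint_pairs: "\<forall>i<k. \<forall>j<k. i \<noteq> j \<longrightarrow> A i \<inter> A j = {} \<and> B i \<inter> B j = {}"
      and disjoint_AB: "\<forall>i<k. \<forall>j<k. A i \<inter> B j = {}"
      by blast+
    have "\<forall>i<k. A i \<inter> B i = {}"
      using disjoint_AB by blast
    note ratio_le = Max_boundary_ratio_le[OF fin assms(3,4) k_pos sets this]
    show ?case
    proof (intro exI[of _ "\<lambda>i. A i \<union> B i"] conjI allI impI)
      fix i j assume "i < k" "j < k" "i \<noteq> j"
      then show "(A i \<union> B i) \<inter> (A j \<union> B j) = {}"
        using disjoint_pairs disjoint_AB by (simp add: Int_Un_distrib Int_Un_distrib2 Int_commute)
    qed (use sets ratio_le in auto)
  qed
qed

end
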